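(* Let $T=\left(\begin{smallmatrix}\mathbb{C}&\mathbb{C}\\0&\mathbb{C}\end{smallmatrix}\right)$ be the algebra of upper triangular complex $2\times2$ matrices (with norm $\|\left(\begin{smallmatrix}a&b\\0&c\end{smallmatrix}\right)\|=|a|+|b|+|c|$), and let $\phi\in\Delta(T)$ be given by $\phi\left(\begin{smallmatrix}a&b\\0&c\end{smallmatrix}\right)=c$. Then $T$ is not approximately left $\phi$-biprojective.
   Context: $\Delta(A)$ is the set of characters of a Banach algebra $A$; $A\otimes_pA$ is the projective tensor product with $a\cdot(b\otimes c)=ab\otimes c$, $(b\otimes c)\cdot a=b\otimes ca$, $\pi_A(a\otimes b)=ab$. For $\phi\in\Delta(A)$, $A$ is approximately left $\phi$-biprojective if there is a net $(\rho_\alpha)$ of bounded linear maps $A\to A\otimes_pA$ such that for all $a,x\in A$: $\|a\cdot\rho_\alpha(x)-\rho_\alpha(ax)\|\to0$, $\|\rho_\alpha(xa)-\phi(a)\rho_\alpha(x)\|\to0$, and $\phi(\pi_A(\rho_\alpha(x)))-\phi(x)\to0$. *)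

theory Defs
  imports Complex_Main "HOL-Library.Numeral_Type"
begin

text \<open>The algebra T of upper triangular complex 2x2 matrices. The triple (a,b,c)
represents the matrix with rows (a, b) and (0, c).\<close>
type_synonym triT = "complex \<times> complex \<times> complex"

fun tadd :: "triT \<Rightarrow> triT \<Rightarrow> triT" where
  "tadd (a,b,c) (a',b',c') = (a + a', b + b', c + c')"

fun tscale :: "complex \<Rightarrow> triT \<Rightarrow> triT" where
  "tscale s (a,b,c) = (s * a, s * b, s * c)"

fun tmult :: "triT \<Rightarrow> triT \<Rightarrow> triT" where
  "tmult (a,b,c) (a',b',c') = (a * a', a * b' + b * c', c * c')"

fun tnorm :: "triT \<Rightarrow> real" where
  "tnorm (a,b,c) = cmod a + cmod b + cmod c"

fun phiT :: "triT \<Rightarrow> complex" where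
  "phiT (a,b,c) = c"

definition tbasis :: "3 \<Rightarrow> triT" where
  "tbasis i = (if i = 0 then (1,0,0) else if i = 1 then (0,1,0) else (0,0,1))"

definition tcoord :: "3 \<Rightarrow> triT \<Rightarrow> complex" where
  "tcoord i x = (if i = 0 then fst x else if i = 1 then fst (snd x) else snd (snd x))"

text \<open>The algebraic tensor product T \<otimes> T, represented by coefficient arrays
with respect to the basis (tbasis i \<otimes> tbasis j).\<close>
type_synonym tensT = "3 \<Rightarrow> 3 \<Rightarrow> complex"

definition tens_of_sum :: "nat \<Rightarrow> (nat \<Rightarrow> triT) \<Rightarrow> (nat \<Rightarrow> triT) \<Rightarrow> tensT" where
  "tens_of_sum n xs ys = (\<lambda>i j. \<Sum>k<n. tcoord i (xs k) * tcoord j (ys k))"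

definition pnorm :: "tensT \<Rightarrow> real" where
  "pnorm u = Inf {(\<Sum>k<n. tnorm (xs k) * tnorm (ys k)) | n xs ys. u = tens_of_sum n xs ys}"

definition tens_diff :: "tensT \<Rightarrow> tensT \<Rightarrow> tensT" where
  "tens_diff u v = (\<lambda>i j. u i j - v i j)"

definition tens_scale :: "complex \<Rightarrow> tensT \<Rightarrow> tensT" where
  "tens_scale s u = (\<lambda>i j. s * u i j)"

text \<open>Left module action a\<cdot>(b\<otimes>c) = ab\<otimes>c, extended linearly.\<close>
definition lact :: "triT \<Rightarrow> tensT \<Rightarrow> tensT" where
  "lact a u = (\<lambda>i j. \<Sum>k\<in>UNIV. u k j * tcoord i (tmult a (tbasis k)))"

text \<open>Right module action (b\<otimes>c)\<cdot>a = b\<otimes>ca, extended linearly.\<close>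
definition ract :: "tensT \<Rightarrow> triT \<Rightarrow> tensT" where
  "ract u a = (\<lambda>i j. \<Sum>l\<in>UNIV. u i l * tcoord j (tmult (tbasis l) a))"

text \<open>The product map pi(b\<otimes>c) = bc, extended linearly.\<close>
definition piT :: "tensT \<Rightarrow> triT" where
  "piT u = (\<Sum>k\<in>UNIV. \<Sum>l\<in>UNIV. u k l * tcoord 0 (tmult (tbasis k) (tbasis l)),
            \<Sum>k\<in>UNIV. \<Sum>l\<in>UNIV. u k l * tcoord 1 (tmult (tbasis k) (tbasis l)),
            \<Sum>k\<in>UNIV. \<Sum>l\<in>UNIV. u k l * tcoord 2 (tmult (tbasis k) (tbasis l)))"

definition bounded_linear_T :: "(triT \<Rightarrow> tensT) \<Rightarrow> bool" where
  "bounded_linear_T \<rho> \<longleftrightarrow>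
     (\<forall>x y. \<rho> (tadd x y) = (\<lambda>i j. \<rho> x i j + \<rho> y i j)) \<and>
     (\<forall>s x. \<rho> (tscale s x) = tens_scale s (\<rho> x)) \<and>
     (\<exists>K. \<forall>x. pnorm (\<rho> x) \<le> K * tnorm x)"

text \<open>Approximate left phi-biprojectivity of T; the net is given by a proper filter F
on an index type 'i (nets over directed sets correspond to proper filters).\<close>
definition approx_left_phi_biproj_net :: "'i filter \<Rightarrow> ('i \<Rightarrow> triT \<Rightarrow> tensT) \<Rightarrow> bool" where
  "approx_left_phi_biproj_net F \<rho> \<longleftrightarrow> F \<noteq> bot \<and>
     (\<forall>\<alpha>. bounded_linear_T (\<rho> \<alpha>)) \<and>
     (\<forall>a x. ((\<lambda>\<alpha>. pnorm (tens_diff (lact a (\<rho> \<alpha> x)) (\<rho> \<alpha> (tmult a x)))) \<longlongrightarrow> 0) F) \<and>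
     (\<forall>a x. ((\<lambda>\<alpha>. pnorm (tens_diff (\<rho> \<alpha> (tmult x a)) (tens_scale (phiT a) (\<rho> \<alpha> x)))) \<longlongrightarrow> 0) F) \<and>
     (\<forall>x. ((\<lambda>\<alpha>. phiT (piT (\<rho> \<alpha> x)) - phiT x) \<longlongrightarrow> 0) F)"

end

theory Submission
  imports Defs
begin

text \<open>Write \<open>E\<^sub>i\<^sub>j\<close> for the matrix units. On the one hand
\<open>\<rho>(E\<^sub>1\<^sub>2) = \<rho>(E\<^sub>1\<^sub>1E\<^sub>1\<^sub>2) \<approx> \<phi>(E\<^sub>1\<^sub>2) \<rho>(E\<^sub>1\<^sub>1) = 0\<close>. On the other hand
\<open>\<rho>(E\<^sub>1\<^sub>2) = \<rho>(E\<^sub>1\<^sub>2E\<^sub>2\<^sub>2) \<approx> E\<^sub>1\<^sub>2 \<cdot> \<rho>(E\<^sub>2\<^sub>2)\<close>, and the \<open>E\<^sub>1\<^sub>2 \<otimes> E\<^sub>2\<^sub>2\<close>-coefficient of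
\<open>E\<^sub>1\<^sub>2 \<cdot> \<rho>(E\<^sub>2\<^sub>2)\<close> is the \<open>E\<^sub>2\<^sub>2 \<otimes> E\<^sub>2\<^sub>2\<close>-coefficient of \<open>\<rho>(E\<^sub>2\<^sub>2)\<close>, which equals
\<open>\<phi>(\<pi>(\<rho>(E\<^sub>2\<^sub>2))) \<rightarrow> \<phi>(E\<^sub>2\<^sub>2) = 1\<close>. Since each coefficient is bounded by the
projective norm, these two limits contradict each other.\<close>

lemma UNIV_3_eq: "(UNIV :: 3 set) = {0, 1, 2}"
proof -
  have "x = 0 \<or> x = 1 \<or> x = 2" for x :: 3
  proof (induct x)
    case (of_int z)
    then have "z = 0 \<or> z = 1 \<or> z = 2" by auto
    then show ?case by auto
  qed
  then show ?thesis by auto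
qed

lemma sum_UNIV_3: "(\<Sum>k\<in>(UNIV :: 3 set). f k) = f 0 + f 1 + f 2"
  unfolding UNIV_3_eq by (simp add: add.assoc)

lemma tbasis_simps [simp]: "tbasis 0 = (1,0,0)" "tbasis 1 = (0,1,0)" "tbasis 2 = (0,0,1)"
  unfolding tbasis_def by simp_all

lemma tcoord_simps [simp]: "tcoord 0 x = fst x" "tcoord 1 x = fst (snd x)" "tcoord 2 x = snd (snd x)"
  unfolding tcoord_def by simp_all

lemma norm_tcoord_le_tnorm: "cmod (tcoord i x) \<le> tnorm x"
  by (cases x) (auto simp: tcoord_def)

lemma tens_of_sum_basis_expansion:
  "u = tens_of_sum 3 (\<lambda>k. tbasis (of_nat k)) (\<lambda>k. (u (of_nat k) 0, u (of_nat k) 1, u (of_nat k) 2))"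
  (is "u = ?expansion")
proof (intro ext)
  fix i j :: 3
  have "{..<3::nat} = {0, 1, 2}" by auto
  then have "?expansion i j
      = tcoord i (1,0,0) * tcoord j (u 0 0, u 0 1, u 0 2) + tcoord i (0,1,0) * tcoord j (u 1 0, u 1 1, u 1 2)
        + tcoord i (0,0,1) * tcoord j (u 2 0, u 2 1, u 2 2)"
    by (simp add: tens_of_sum_def)
  moreover have "i \<in> {0, 1, 2}" "j \<in> {0, 1, 2}" using UNIV_3_eq by auto
  ultimately show "u i j = ?expansion i j" by auto
qed

lemma norm_coeff_le_pnorm: "cmod (u i j) \<le> pnorm u"
  unfolding pnorm_def
proof (rule cInf_greatest)
  show "{(\<Sum>k<n. tnorm (xs k) * tnorm (ys k)) | n xs ys. u = tens_of_sum n xs ys} \<noteq> {}"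
    using tens_of_sum_basis_expansion by blast
next
  fix s assume "s \<in> {(\<Sum>k<n. tnorm (xs k) * tnorm (ys k)) | n xs ys. u = tens_of_sum n xs ys}"
  then obtain n xs ys where s: "s = (\<Sum>k<n. tnorm (xs k) * tnorm (ys k))"
    and u: "u = tens_of_sum n xs ys" by blast
  have "cmod (u i j) \<le> (\<Sum>k<n. cmod (tcoord i (xs k) * tcoord j (ys k)))"
    unfolding u tens_of_sum_def by (rule norm_sum)
  also have "\<dots> \<le> s"
    unfolding s norm_mult
    by (intro sum_mono mult_mono norm_tcoord_le_tnorm) (auto intro: order_trans[OF norm_ge_zero norm_tcoord_le_tnorm])
  finally show "cmod (u i j) \<le> s" .
qed

lemma tendsto_coeff_if_pnorm_tendsto_0:
  assumes "((\<lambda>\<alpha>. pnorm (u \<alpha>)) \<longlongrightarrow> 0) F"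
  shows "((\<lambda>\<alpha>. u \<alpha> i j) \<longlongrightarrow> 0) F"
proof (rule tendsto_norm_zero_cancel, rule tendsto_sandwich)
  show "\<forall>\<^sub>F \<alpha> in F. 0 \<le> norm (u \<alpha> i j)" "\<forall>\<^sub>F \<alpha> in F. norm (u \<alpha> i j) \<le> pnorm (u \<alpha>)"
    by (simp_all add: norm_coeff_le_pnorm)
qed (use assms in auto)

lemma phiT_piT: "phiT (piT v) = v 2 2"
  unfolding piT_def sum_UNIV_3 by simp

lemma lact_E12_coeff: "lact (0,1,0) v 1 2 = v 2 2"
  unfolding lact_def sum_UNIV_3 by simp

theorem mainTheorem3:
  fixes F :: "'i filter" and \<rho> :: "'i \<Rightarrow> triT \<Rightarrow> tensT"
  shows "\<not> approx_left_phi_biproj_net F \<rho>"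
proof
  assume "approx_left_phi_biproj_net F \<rho>"
  then have "F \<noteq> bot"
    and left: "\<And>a x. ((\<lambda>\<alpha>. pnorm (tens_diff (lact a (\<rho> \<alpha> x)) (\<rho> \<alpha> (tmult a x)))) \<longlongrightarrow> 0) F"
    and right: "\<And>a x. ((\<lambda>\<alpha>. pnorm (tens_diff (\<rho> \<alpha> (tmult x a)) (tens_scale (phiT a) (\<rho> \<alpha> x)))) \<longlongrightarrow> 0) F"
    and diag: "\<And>x. ((\<lambda>\<alpha>. phiT (piT (\<rho> \<alpha> x)) - phiT x) \<longlongrightarrow> 0) F"
    unfolding approx_left_phi_biproj_net_def by blast+
  have E12_vanishes: "((\<lambda>\<alpha>. \<rho> \<alpha> (0,1,0) 1 2) \<longlongrightarrow> 0) F"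
    using tendsto_coeff_if_pnorm_tendsto_0[OF right[of "(1,0,0)" "(0,1,0)"], of 1 2]
    by (simp add: tens_diff_def tens_scale_def)
  have "((\<lambda>\<alpha>. \<rho> \<alpha> (0,0,1) 2 2 - \<rho> \<alpha> (0,1,0) 1 2) \<longlongrightarrow> 0) F"
    using tendsto_coeff_if_pnorm_tendsto_0[OF left[of "(0,1,0)" "(0,0,1)"], of 1 2]
    by (simp add: tens_diff_def lact_E12_coeff)
  from tendsto_add[OF this E12_vanishes]
  have "((\<lambda>\<alpha>. \<rho> \<alpha> (0,0,1) 2 2) \<longlongrightarrow> 0) F" by simp
  moreover have "((\<lambda>\<alpha>. \<rho> \<alpha> (0,0,1) 2 2) \<longlongrightarrow> 1) F"
    using tendsto_add[OF diag[of "(0,0,1)"] tendsto_const[of 1]] by (simp add: phiT_piT)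
  ultimately show False
    using tendsto_unique[OF \<open>F \<noteq> bot\<close>] by force
qed

end
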